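(* If $n$ is a power of $2$ (with exponent at least $1$), then $$\sum_{k=0}^{n-1}(-1)^k(2k+1)^3D_k\equiv 2n^2\pmod{n^3}.$$
   Context: $D_n=\sum_{k=0}^{n}\binom{n}{k}\binom{n+k}{k}$ are the central Delannoy numbers. *)

theory Defs
  imports Main "HOL-Number_Theory.Cong"
begin

definition delannoy :: "nat \<Rightarrow> int" where
  "delannoy n = (\<Sum>k=0..n. int (n choose k) * int ((n + k) choose k))"

end

theory Submission
  imports Defs Complex_Main "HOL-Library.Discrete_Functions"
begin

text \<open>
  Write \<open>S(n)\<close> for the sum and \<open>D(n)\<close> for the Delannoy numbers. The recurrence
  \<open>(n+2) D(n+2) = 3(2n+3) D(n+1) - (n+1) D(n)\<close> makes the sum telescope:
  \<open>4 S(n) = (-1)^(n-1) n ((4n^2 - 1)(D(n) + D(n-1)) - 4n (D(n) - D(n-1)))\<close>.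
  By Vandermonde, \<open>D(N) = \<Sum>k. 2^k C(N,k)^2\<close>, so \<open>D(N+1) = 3 D(N) + 4 M(N)\<close> with
  \<open>M(N) = \<Sum>k. 2^k C(N,k) C(N,k+1)\<close>. For \<open>N = 2^m - 1\<close> the binomial coefficient \<open>C(N,k)\<close>
  differs from \<open>(-1)^k\<close> by a multiple of \<open>2^(m - log k)\<close>, so replacing \<open>C(N,k)\<close> by \<open>(-1)^k\<close>
  in the quadratic terms costs only multiples of \<open>4^m = n^2\<close>; the resulting linear binomial sums
  are explicit and give \<open>D(n-1) \<equiv> -1\<close> and \<open>M(n-1) \<equiv> 1 (mod n^2)\<close>. Then
  \<open>D(n) + D(n-1) = 4 (D(n-1) + M(n-1)) \<equiv> 0 (mod 4n^2)\<close> and \<open>D(n) - D(n-1) \<equiv> 2 (mod n^2)\<close>,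
  which the closed form turns into \<open>S(n) \<equiv> 2n^2 (mod n^3)\<close>.
\<close>

section \<open>The three-term recurrence\<close>

definition delannoy_term :: "nat \<Rightarrow> nat \<Rightarrow> real" where
  "delannoy_term n k = real (n choose k) * real ((n + k) choose k)"

lemma delannoy_term_pochhammer:
  "delannoy_term n k * (fact k)\<^sup>2 = pochhammer (real n - real k + 1) (2 * k)"
proof -
  have lower: "real (n choose k) = pochhammer (real n - real k + 1) k / fact k"
    using binomial_gbinomial[of n k, where 'a=real] gbinomial_pochhammer'[of "real n" k] by simp
  have upper: "real ((n + k) choose k) = pochhammer (real n + 1) k / fact k"
    using binomial_gbinomial[of "n + k" k, where 'a=real]
      gbinomial_pochhammer'[of "real (n + k)" k] by simp
  have "pochhammer (real n - real k + 1) (k + k)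
      = pochhammer (real n - real k + 1) k * pochhammer (real n + 1) k"
    using pochhammer_product'[of "real n - real k + 1" k k] by simp
  then show ?thesis
    unfolding delannoy_term_def lower upper by (simp add: power2_eq_square mult_2)
qed

lemma delannoy_term_eq_0: "n < k \<Longrightarrow> delannoy_term n k = 0"
  unfolding delannoy_term_def by simp

text \<open>The WZ-type certificate: the recurrence operator applied to the summand in row \<open>k+1\<close>
  is a multiple of the summand in row \<open>k\<close>. All four terms are products of one Pochhammer
  symbol \<open>Z\<close> with a few linear factors.\<close>

lemma delannoy_term_recurrence:
  "real (n + 2) * delannoy_term (n + 2) (Suc k) - real (2 * n + 3) * delannoy_term (n + 1) (Suc k)
     + real (n + 1) * delannoy_term n (Suc k)
   = 2 * real (2 * n + 3) * delannoy_term (n + 1) k"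
proof -
  define z :: real where "z = real n - real k + 2"
  define Z where "Z = pochhammer z (2 * k)"
  have t2: "delannoy_term (n + 2) (Suc k) * (fact (Suc k))\<^sup>2
      = Z * (real n + real k + 2) * (real n + real k + 3)"
  proof -
    have "delannoy_term (n + 2) (Suc k) * (fact (Suc k))\<^sup>2 = pochhammer z (2 * k + 2)"
      using delannoy_term_pochhammer[of "n + 2" "Suc k"] unfolding z_def
      by (simp add: algebra_simps)
    also have "\<dots> = Z * (z + 2 * k) * (z + 2 * k + 1)"
      unfolding Z_def by (simp add: pochhammer_rec' numeral_2_eq_2 algebra_simps)
    finally show ?thesis unfolding z_def by (simp add: algebra_simps)
  qed
  have t1: "delannoy_term (n + 1) (Suc k) * (fact (Suc k))\<^sup>2
      = (z - 1) * Z * (real n + real k + 2)"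
  proof -
    have "delannoy_term (n + 1) (Suc k) * (fact (Suc k))\<^sup>2 = pochhammer (z - 1) (Suc (2 * k + 1))"
      using delannoy_term_pochhammer[of "n + 1" "Suc k"] unfolding z_def
      by (simp add: algebra_simps)
    also have "\<dots> = (z - 1) * pochhammer z (Suc (2 * k))"
      by (subst pochhammer_rec) simp
    also have "\<dots> = (z - 1) * (Z * (z + 2 * k))"
      unfolding Z_def by (subst pochhammer_rec') (simp add: algebra_simps)
    finally show ?thesis unfolding z_def by (simp add: algebra_simps)
  qed
  have t0: "delannoy_term n (Suc k) * (fact (Suc k))\<^sup>2 = (z - 2) * (z - 1) * Z"
  proof -
    have "delannoy_term n (Suc k) * (fact (Suc k))\<^sup>2 = pochhammer (z - 2) (Suc (Suc (2 * k)))"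
      using delannoy_term_pochhammer[of n "Suc k"] unfolding z_def by (simp add: algebra_simps)
    then show ?thesis unfolding Z_def by (simp add: pochhammer_rec algebra_simps)
  qed
  have s: "delannoy_term (n + 1) k * (fact k)\<^sup>2 = Z"
    using delannoy_term_pochhammer[of "n + 1" k] unfolding z_def Z_def by (simp add: algebra_simps)
  have fact_Suc_sq: "(fact (Suc k) :: real)\<^sup>2 = (real (Suc k))\<^sup>2 * (fact k)\<^sup>2"
    by (simp add: power_mult_distrib)
  have "(real (n + 2) * delannoy_term (n + 2) (Suc k)
        - real (2 * n + 3) * delannoy_term (n + 1) (Suc k)
        + real (n + 1) * delannoy_term n (Suc k)) * (fact (Suc k))\<^sup>2
      = real (n + 2) * (Z * (real n + real k + 2) * (real n + real k + 3))
        - real (2 * n + 3) * ((z - 1) * Z * (real n + real k + 2))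
        + real (n + 1) * ((z - 2) * (z - 1) * Z)"
    unfolding t2[symmetric] t1[symmetric] t0[symmetric] by (simp add: algebra_simps)
  also have "\<dots> = 2 * real (2 * n + 3) * (real (Suc k))\<^sup>2 * Z"
    unfolding z_def by (simp add: algebra_simps power2_eq_square)
  also have "\<dots> = 2 * real (2 * n + 3) * delannoy_term (n + 1) k * (fact (Suc k))\<^sup>2"
    unfolding fact_Suc_sq s[symmetric] by (simp add: algebra_simps)
  finally show ?thesis by simp
qed

lemma of_int_delannoy: "real_of_int (delannoy n) = (\<Sum>k\<le>n + p. delannoy_term n k)"
proof -
  have "real_of_int (delannoy n) = (\<Sum>k\<le>n. delannoy_term n k)"
    unfolding delannoy_def delannoy_term_def atLeast0AtMost by simp
  also have "\<dots> = (\<Sum>k\<le>n + p. delannoy_term n k)"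
    by (rule sum.mono_neutral_left) (auto simp: delannoy_term_eq_0)
  finally show ?thesis .
qed

lemma delannoy_recurrence:
  "int (n + 2) * delannoy (n + 2) = 3 * (2 * int n + 3) * delannoy (n + 1) - int (n + 1) * delannoy n"
proof -
  define L where "L k = real (n + 2) * delannoy_term (n + 2) k
    - real (2 * n + 3) * delannoy_term (n + 1) k + real (n + 1) * delannoy_term n k" for k
  have "real (n + 2) * real_of_int (delannoy (n + 2)) - real (2 * n + 3) * real_of_int (delannoy (n + 1))
      + real (n + 1) * real_of_int (delannoy n) = (\<Sum>k\<le>Suc (n + 1). L k)"
    unfolding L_def of_int_delannoy[of "n + 2" 0] of_int_delannoy[of "n + 1" 1]
      of_int_delannoy[of n 2]
    by (simp add: sum.distrib sum_subtractf sum_distrib_left del: sum.atMost_Suc)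
  also have "\<dots> = L 0 + (\<Sum>k\<le>n + 1. L (Suc k))"
    by (rule sum.atMost_Suc_shift)
  also have "\<dots> = (\<Sum>k\<le>n + 1. 2 * real (2 * n + 3) * delannoy_term (n + 1) k)"
    unfolding L_def delannoy_term_recurrence by (simp add: delannoy_term_def)
  also have "\<dots> = 2 * real (2 * n + 3) * real_of_int (delannoy (n + 1))"
    unfolding of_int_delannoy[of "n + 1" 0] by (simp add: sum_distrib_left del: sum.atMost_Suc)
  finally have "real_of_int (int (n + 2) * delannoy (n + 2))
      = real_of_int (3 * (2 * int n + 3) * delannoy (n + 1) - int (n + 1) * delannoy n)"
    by (simp add: algebra_simps)
  then show ?thesis
    by (simp only: of_int_eq_iff)
qed

section \<open>The partial sums in closed form\<close>

definition alt_delannoy_sum :: "nat \<Rightarrow> int" where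
  "alt_delannoy_sum n = (\<Sum>k<n. (-1) ^ k * (2 * int k + 1) ^ 3 * delannoy k)"

lemma alt_delannoy_sum_closed_form:
  "4 * alt_delannoy_sum (n + 1) = (-1) ^ n * int (n + 1) *
     ((4 * int (n + 1) ^ 2 - 1) * (delannoy (n + 1) + delannoy n)
      - 4 * int (n + 1) * (delannoy (n + 1) - delannoy n))"
proof (induction n)
  case 0
  then show ?case by (simp add: alt_delannoy_sum_def delannoy_def)
next
  case (Suc n)
  define s :: int where "s = (-1) ^ n"
  define x where "x = int n"
  define a where "a = delannoy n"
  define b where "b = delannoy (n + 1)"
  define c where "c = delannoy (n + 2)"
  have rec: "(x + 2) * c = 3 * (2 * x + 3) * b - (x + 1) * a"
    using delannoy_recurrence[of n] unfolding a_def b_def c_def x_def by (simp add: algebra_simps)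
  have IH: "4 * alt_delannoy_sum (n + 1)
      = s * (x + 1) * ((4 * (x + 1)\<^sup>2 - 1) * (b + a) - 4 * (x + 1) * (b - a))"
    using Suc.IH by (simp only: s_def a_def b_def x_def of_nat_add of_nat_1)
  have step: "alt_delannoy_sum (n + 2) = alt_delannoy_sum (n + 1) - s * (2 * x + 3) ^ 3 * b"
    unfolding alt_delannoy_sum_def s_def b_def x_def by (simp add: algebra_simps)
  have "- s * (x + 2) * ((4 * (x + 2)\<^sup>2 - 1) * (c + b) - 4 * (x + 2) * (c - b))
      = - s * ((4 * (x + 2)\<^sup>2 - 1 - 4 * (x + 2)) * ((x + 2) * c)
               + (x + 2) * (4 * (x + 2)\<^sup>2 - 1 + 4 * (x + 2)) * b)"
    by (simp add: algebra_simps)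
  also have "\<dots> = - s * ((4 * (x + 2)\<^sup>2 - 1 - 4 * (x + 2)) * (3 * (2 * x + 3) * b - (x + 1) * a)
               + (x + 2) * (4 * (x + 2)\<^sup>2 - 1 + 4 * (x + 2)) * b)"
    unfolding rec ..
  also have "\<dots> = s * (x + 1) * ((4 * (x + 1)\<^sup>2 - 1) * (b + a) - 4 * (x + 1) * (b - a))
                  - 4 * s * (2 * x + 3) ^ 3 * b"
    by (simp add: algebra_simps power2_eq_square power3_eq_cube)
  also have "\<dots> = 4 * alt_delannoy_sum (n + 1) - 4 * s * (2 * x + 3) ^ 3 * b"
    unfolding IH ..
  also have "\<dots> = 4 * alt_delannoy_sum (n + 2)"
    unfolding step by (simp add: algebra_simps)
  finally show ?case
    unfolding s_def c_def b_def x_def by (simp add: algebra_simps)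
qed

section \<open>Delannoy numbers as sums of squares\<close>

lemma sum_choose_mult_choose:
  assumes "i \<le> n"
  shows "(\<Sum>k\<le>n. (n choose k) * (k choose i)) = (n choose i) * 2 ^ (n - i)"
proof -
  have "(\<Sum>k\<le>n. (n choose k) * (k choose i)) = (\<Sum>k\<in>{i..n}. (n choose k) * (k choose i))"
    by (rule sum.mono_neutral_right) auto
  also have "\<dots> = (\<Sum>l\<in>{0..n - i}. (n choose (l + i)) * ((l + i) choose i))"
    using sum.shift_bounds_cl_nat_ivl[of "\<lambda>k. (n choose k) * (k choose i)" 0 i "n - i"] assms
    by simp
  also have "\<dots> = (\<Sum>l\<in>{0..n - i}. (n choose i) * ((n - i) choose l))"
    by (rule sum.cong[OF refl]) (use choose_mult[of i _ n] assms in auto)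
  also have "\<dots> = (n choose i) * 2 ^ (n - i)"
    by (simp add: sum_distrib_left[symmetric] atLeast0AtMost choose_row_sum)
  finally show ?thesis .
qed

lemma delannoy_eq_sum_choose_squared: "delannoy n = (\<Sum>k\<le>n. 2 ^ k * int (n choose k) ^ 2)"
proof -
  have vandermonde': "(n + k) choose k = (\<Sum>i\<le>n. (n choose i) * (k choose i))" if "k \<le> n" for k
  proof -
    have "(n + k) choose k = (\<Sum>i\<le>k. (n choose i) * (k choose (k - i)))"
      using vandermonde[of n k k] by simp
    also have "\<dots> = (\<Sum>i\<le>k. (n choose i) * (k choose i))"
      by (rule sum.cong[OF refl]) (simp add: binomial_symmetric[symmetric])
    also have "\<dots> = (\<Sum>i\<le>n. (n choose i) * (k choose i))"
      by (rule sum.mono_neutral_left) (use that in auto)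
    finally show ?thesis .
  qed
  have "(\<Sum>k\<le>n. (n choose k) * ((n + k) choose k))
      = (\<Sum>k\<le>n. \<Sum>i\<le>n. (n choose i) * ((n choose k) * (k choose i)))"
    by (rule sum.cong[OF refl]) (simp add: vandermonde' sum_distrib_left mult.left_commute)
  also have "\<dots> = (\<Sum>i\<le>n. \<Sum>k\<le>n. (n choose i) * ((n choose k) * (k choose i)))"
    by (rule sum.swap)
  also have "\<dots> = (\<Sum>i\<le>n. (n choose i)\<^sup>2 * 2 ^ (n - i))"
    by (rule sum.cong[OF refl])
      (simp add: sum_distrib_left[symmetric] sum_choose_mult_choose power2_eq_square)
  also have "\<dots> = (\<Sum>i\<le>n. (n choose (n - i))\<^sup>2 * 2 ^ (n - i))"
    by (rule sum.cong[OF refl]) (simp add: binomial_symmetric[symmetric])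
  also have "\<dots> = (\<Sum>i\<le>n. 2 ^ i * (n choose i)\<^sup>2)"
    unfolding atLeast0AtMost[symmetric] by (subst sum.atLeastAtMost_rev) (simp add: mult.commute)
  finally have "(\<Sum>k\<le>n. (n choose k) * ((n + k) choose k)) = (\<Sum>i\<le>n. 2 ^ i * (n choose i)\<^sup>2)" .
  then have "int (\<Sum>k\<le>n. (n choose k) * ((n + k) choose k)) = int (\<Sum>i\<le>n. 2 ^ i * (n choose i)\<^sup>2)"
    by (rule arg_cong)
  then show ?thesis
    unfolding delannoy_def atLeast0AtMost by simp
qed

definition delannoy_mixed :: "nat \<Rightarrow> int" where
  "delannoy_mixed n = (\<Sum>k\<le>n. 2 ^ k * int (n choose k) * int (n choose Suc k))"

lemma delannoy_Suc: "delannoy (Suc n) = 3 * delannoy n + 4 * delannoy_mixed n"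
proof -
  let ?c = "\<lambda>k. int (n choose k)"
  have shifted: "(\<Sum>k\<le>n. 2 ^ Suc k * ?c (Suc k) ^ 2) = delannoy n - 1"
  proof -
    have "(\<Sum>k\<le>Suc n. 2 ^ k * ?c k ^ 2) = 1 + (\<Sum>k\<le>n. 2 ^ Suc k * ?c (Suc k) ^ 2)"
      by (subst sum.atMost_Suc_shift) simp
    then show ?thesis
      by (simp add: delannoy_eq_sum_choose_squared[of n] binomial_eq_0)
  qed
  have "delannoy (Suc n) = 1 + (\<Sum>k\<le>n. 2 ^ Suc k * (?c k + ?c (Suc k)) ^ 2)"
    unfolding delannoy_eq_sum_choose_squared
    by (subst sum.atMost_Suc_shift) (simp add: binomial_Suc_Suc)
  also have "\<dots> = 1 + 2 * (\<Sum>k\<le>n. 2 ^ k * ?c k ^ 2) + 4 * delannoy_mixed n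
      + (\<Sum>k\<le>n. 2 ^ Suc k * ?c (Suc k) ^ 2)"
    unfolding delannoy_mixed_def
    by (simp add: sum.distrib sum_distrib_left power2_eq_square algebra_simps)
  finally show ?thesis
    unfolding shifted delannoy_eq_sum_choose_squared[of n] by simp
qed

section \<open>Binomial coefficients of \<open>2\<^sup>m - 1\<close>\<close>

lemma pow2_dvd_mult_cancel:
  fixes c :: int
  assumes "\<not> 2 ^ (j + 1) dvd k" and "2 ^ m dvd int k * c"
  shows "2 ^ (m - j) dvd c"
  using assms
proof (induction j arbitrary: m k)
  case 0
  then have "coprime ((2::int) ^ m) (int k)"
    by (simp add: coprime_commute)
  with "0.prems"(2) show ?case
    by (simp add: coprime_dvd_mult_right_iff)
next
  case (Suc j)
  show ?case
  proof (cases "even k \<and> m > 0")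
    case True
    then obtain k' m' where k: "k = 2 * k'" and m: "m = Suc m'"
      using evenE gr0_implies_Suc by metis
    have "\<not> 2 ^ (j + 1) dvd k'" and "(2::int) ^ m' dvd int k' * c"
      using Suc.prems unfolding k m by (simp_all add: mult_dvd_mono)
    then show ?thesis
      using Suc.IH m by simp
  next
    case False
    then have "(2::int) ^ m dvd c"
      using Suc.prems(2) by (auto simp: coprime_commute coprime_dvd_mult_right_iff)
    then show ?thesis
      by (meson diff_le_self dvd_trans le_imp_power_dvd)
  qed
qed

lemma double_le_pow2: "2 * j \<le> (2::nat) ^ j"
proof (induction j)
  case (Suc j)
  have "2 \<le> (2::nat) ^ j" if "j > 0"
    using power_increasing[of 1 j "2::nat"] that by simp
  with Suc.IH show ?case
    by (cases "j = 0") auto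
qed simp

lemma pow2_dvd_choose:
  assumes "0 < k" and "k < 2 ^ (j + 1)"
  shows "(2::int) ^ (m - j) dvd int (2 ^ m choose k)"
proof -
  obtain i where k: "k = Suc i"
    using assms(1) gr0_implies_Suc by blast
  have "int k * int (2 ^ m choose k) = int (2 ^ m) * int ((2 ^ m - 1) choose i)"
    using arg_cong[OF binomial_absorption[of i "2 ^ m"], of int] unfolding k of_nat_mult .
  then have "(2::int) ^ m dvd int k * int (2 ^ m choose k)"
    by simp
  moreover have "\<not> 2 ^ (j + 1) dvd k"
    using assms by (auto dest: dvd_imp_le)
  ultimately show ?thesis
    using pow2_dvd_mult_cancel by blast
qed

text \<open>\<open>(-1)^k\<close> is the value of \<open>C(N,k)\<close> at \<open>N = -1\<close>, which is 2-adically close to \<open>2^m - 1\<close>.\<close>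

definition choose_defect :: "nat \<Rightarrow> nat \<Rightarrow> int" where
  "choose_defect N k = int (N choose k) - (-1) ^ k"

lemma pow2_dvd_choose_defect:
  assumes "Suc N = 2 ^ m" and "i < 2 ^ (j + 1)"
  shows "(2::int) ^ (m - j) dvd choose_defect N i"
  using assms(2)
proof (induction i)
  case 0
  then show ?case by (simp add: choose_defect_def)
next
  case (Suc i)
  have "choose_defect N (Suc i) = int (2 ^ m choose Suc i) - choose_defect N i"
    unfolding choose_defect_def assms(1)[symmetric] by (simp add: binomial_Suc_Suc)
  with Suc pow2_dvd_choose[of "Suc i" j m] show ?case
    by (simp add: dvd_diff)
qed

lemma pow2_dvd_mult_mult:
  fixes x y :: int
  assumes "2 ^ a dvd x" and "2 ^ b dvd y" and "e \<le> k + a + b"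
  shows "2 ^ e dvd 2 ^ k * x * y"
proof -
  have "(2::int) ^ k * 2 ^ a * 2 ^ b dvd 2 ^ k * x * y"
    using assms(1,2) by (intro mult_dvd_mono dvd_refl)
  moreover have "(2::int) ^ e dvd 2 ^ k * 2 ^ a * 2 ^ b"
    unfolding power_add[symmetric] using assms(3) by (rule le_imp_power_dvd)
  ultimately show ?thesis
    by (rule dvd_trans[rotated])
qed

lemma choose_defect_dyadic_block:
  assumes "Suc N = 2 ^ m" and "0 < k" and "k \<le> N"
  obtains j where "2 ^ j \<le> k" and "k < 2 ^ (j + 1)" and "j < m"
    and "(2::int) ^ (m - j) dvd choose_defect N k"
proof -
  define j where "j = floor_log k"
  have j: "2 ^ j \<le> k" "k < 2 ^ (j + 1)"
    using assms(2) floor_log_exp2_le[of k] floor_log_exp2_gt[of k] unfolding j_def by simp_all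
  have "(2::nat) ^ j < 2 ^ m"
    using j(1) assms(1,3) by linarith
  then have "j < m"
    by simp
  with j pow2_dvd_choose_defect[OF assms(1) j(2)] show ?thesis
    using that by blast
qed

lemma pow2_dvd_choose_defect_square:
  assumes "Suc N = 2 ^ m" and "k \<le> N"
  shows "(2::int) ^ (2 * m) dvd 2 ^ k * choose_defect N k * choose_defect N k"
proof (cases "k = 0")
  case True
  then show ?thesis by (simp add: choose_defect_def)
next
  case False
  then obtain j where j: "2 ^ j \<le> k" "j < m" and dk: "(2::int) ^ (m - j) dvd choose_defect N k"
    using choose_defect_dyadic_block[OF assms(1) _ assms(2)] by blast
  have "2 * m \<le> k + (m - j) + (m - j)"
    using double_le_pow2[of j] j by linarith
  with pow2_dvd_mult_mult[OF dk dk] show ?thesis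
    by blast
qed

lemma pow2_dvd_choose_defect_consecutive:
  assumes "Suc N = 2 ^ m" and "k \<le> N"
  shows "(2::int) ^ (2 * m) dvd 2 ^ k * choose_defect N k * choose_defect N (Suc k)"
proof (cases "k = 0")
  case True
  then show ?thesis by (simp add: choose_defect_def)
next
  case False
  then obtain j where j: "2 ^ j \<le> k" "k < 2 ^ (j + 1)" "j < m"
    and dk: "(2::int) ^ (m - j) dvd choose_defect N k"
    using choose_defect_dyadic_block[OF assms(1) _ assms(2)] by blast
  show ?thesis
  proof (cases "Suc k < 2 ^ (j + 1)")
    case True
    have "2 * m \<le> k + (m - j) + (m - j)"
      using double_le_pow2[of j] j by linarith
    with pow2_dvd_mult_mult[OF dk pow2_dvd_choose_defect[OF assms(1) True]] show ?thesis
      by blast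
  next
    case False
    then have k: "Suc k = 2 ^ (j + 1)"
      using j(2) by simp
    then have "Suc k < 2 ^ (j + 1 + 1)"
      by simp
    moreover have "2 * m \<le> k + (m - j) + (m - (j + 1))"
      using double_le_pow2[of "j + 1"] k j(3) by simp
    ultimately show ?thesis
      using pow2_dvd_mult_mult[OF dk pow2_dvd_choose_defect[OF assms(1)]] by blast
  qed
qed

section \<open>Congruences modulo \<open>n\<^sup>2\<close>\<close>

lemma neg2_pow_eq: "(-2::int) ^ k = (-1) ^ k * 2 ^ k"
  by (metis mult_minus1 power_mult_distrib)

lemma choose_square_cong:
  assumes "Suc N = 2 ^ m" and "k \<le> N"
  shows "[2 ^ k * int (N choose k) ^ 2 = 2 * (-2) ^ k * int (N choose k) - 2 ^ k] (mod 2 ^ (2 * m))"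
proof -
  have "2 ^ k * int (N choose k) ^ 2 - (2 * (-2) ^ k * int (N choose k) - 2 ^ k)
      = 2 ^ k * choose_defect N k * choose_defect N k"
    unfolding choose_defect_def neg2_pow_eq
    by (simp add: algebra_simps power2_eq_square flip: power_add)
  then show ?thesis
    using pow2_dvd_choose_defect_square[OF assms] by (simp add: cong_iff_dvd_diff)
qed

lemma choose_product_cong:
  assumes "Suc N = 2 ^ m" and "k \<le> N"
  shows "[2 ^ k * int (N choose k) * int (N choose Suc k)
      = (-2) ^ k * (int (N choose Suc k) - int (N choose k)) + 2 ^ k] (mod 2 ^ (2 * m))"
proof -
  have "2 ^ k * int (N choose k) * int (N choose Suc k)
        - ((-2) ^ k * (int (N choose Suc k) - int (N choose k)) + 2 ^ k)
      = 2 ^ k * choose_defect N k * choose_defect N (Suc k)"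
    unfolding choose_defect_def neg2_pow_eq
    by (simp add: algebra_simps flip: power_add)
  then show ?thesis
    using pow2_dvd_choose_defect_consecutive[OF assms] by (simp add: cong_iff_dvd_diff)
qed

lemma sum_neg2_pow_choose: "(\<Sum>k\<le>N. (-2) ^ k * int (N choose k)) = (-1) ^ N"
  using binomial_ring[of "-2 :: int" 1 N] by (simp add: mult.commute)

lemma sum_neg2_pow_choose_Suc: "2 * (\<Sum>k\<le>N. (-2) ^ k * int (N choose Suc k)) = 1 - (-1) ^ N"
proof -
  have "-2 * (\<Sum>k\<le>N. (-2) ^ k * int (N choose Suc k)) = (\<Sum>k\<le>N. (-2) ^ Suc k * int (N choose Suc k))"
    by (simp add: sum_distrib_left mult.assoc)
  also have "\<dots> = (\<Sum>k\<le>Suc N. (-2) ^ k * int (N choose k)) - 1"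
    by (subst sum.atMost_Suc_shift) simp
  also have "\<dots> = (-1) ^ N - 1"
    using sum_neg2_pow_choose[of N] by (simp add: binomial_eq_0)
  finally show ?thesis
    by simp
qed

lemma sum_pow2_atMost: "(\<Sum>k\<le>N. (2::int) ^ k) = 2 ^ Suc N - 1"
  by (induction N) simp_all

lemma pow2_square_dvd_pow2_pow2: "(2::int) ^ (2 * m) dvd 2 ^ 2 ^ m"
  by (rule le_imp_power_dvd) (rule double_le_pow2)

lemma odd_pred_pow2:
  assumes "Suc N = 2 ^ m" and "m \<ge> 1"
  shows "odd N"
  using assms by (metis even_Suc even_power even_numeral not_one_le_zero neq0_conv)

lemma delannoy_pred_pow2_cong:
  assumes "Suc N = 2 ^ m" and "m \<ge> 1"
  shows "[delannoy N = -1] (mod 2 ^ (2 * m))"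
proof -
  have "[delannoy N = (\<Sum>k\<le>N. 2 * (-2) ^ k * int (N choose k) - 2 ^ k)] (mod 2 ^ (2 * m))"
    unfolding delannoy_eq_sum_choose_squared by (rule cong_sum) (simp add: choose_square_cong assms)
  also have "(\<Sum>k\<le>N. 2 * (-2) ^ k * int (N choose k) - 2 ^ k) = -1 - 2 ^ 2 ^ m"
    using sum_neg2_pow_choose[of N] odd_pred_pow2[OF assms] assms(1)
    by (simp add: sum_subtractf sum_pow2_atMost sum_distrib_left[symmetric] mult.assoc)
  also have "[-1 - 2 ^ 2 ^ m = -1 :: int] (mod 2 ^ (2 * m))"
    using pow2_square_dvd_pow2_pow2 by (simp add: cong_iff_dvd_diff)
  finally show ?thesis .
qed

lemma delannoy_mixed_pred_pow2_cong:
  assumes "Suc N = 2 ^ m" and "m \<ge> 1"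
  shows "[delannoy_mixed N = 1] (mod 2 ^ (2 * m))"
proof -
  have "[delannoy_mixed N
      = (\<Sum>k\<le>N. (-2) ^ k * (int (N choose Suc k) - int (N choose k)) + 2 ^ k)] (mod 2 ^ (2 * m))"
    unfolding delannoy_mixed_def by (rule cong_sum) (simp add: choose_product_cong assms)
  also have "(\<Sum>k\<le>N. (-2) ^ k * (int (N choose Suc k) - int (N choose k)) + 2 ^ k) = 1 + 2 ^ 2 ^ m"
    using sum_neg2_pow_choose[of N] sum_neg2_pow_choose_Suc[of N] odd_pred_pow2[OF assms] assms(1)
    by (simp add: sum.distrib sum_subtractf sum_pow2_atMost right_diff_distrib)
  also have "[1 + 2 ^ 2 ^ m = 1 :: int] (mod 2 ^ (2 * m))"
    using pow2_square_dvd_pow2_pow2 by (simp add: cong_iff_dvd_diff)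
  finally show ?thesis .
qed

theorem mainTheorem4:
  fixes n m :: nat
  assumes "m \<ge> 1" and "n = 2 ^ m"
  shows "[(\<Sum>k=0..n-1. (-1) ^ k * (2 * int k + 1) ^ 3 * delannoy k) = 2 * int n ^ 2] (mod (int n ^ 3))"
proof -
  obtain N where N: "Suc N = 2 ^ m"
    using gr0_implies_Suc[of "2 ^ m"] by auto
  have n_sq: "int n ^ 2 = 2 ^ (2 * m)"
    using assms(2) by (simp add: power_mult[symmetric] mult.commute)
  obtain a where a: "delannoy N = -1 + int n ^ 2 * a"
    using delannoy_pred_pow2_cong[OF N assms(1)] unfolding n_sq cong_iff_dvd_diff
    by (auto elim!: dvdE simp: algebra_simps)
  obtain b where b: "delannoy_mixed N = 1 + int n ^ 2 * b"
    using delannoy_mixed_pred_pow2_cong[OF N assms(1)] unfolding n_sq cong_iff_dvd_diff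
    by (auto elim!: dvdE simp: algebra_simps)
  have "4 * alt_delannoy_sum n = (-1) ^ N * int n *
      ((4 * int n ^ 2 - 1) * (delannoy n + delannoy N) - 4 * int n * (delannoy n - delannoy N))"
    using alt_delannoy_sum_closed_form[of N] N assms(2) by simp
  also have "\<dots> = 4 * (2 * int n ^ 2 + int n ^ 3 * (int n * (2 * a + 4 * b) - (4 * int n ^ 2 - 1) * (a + b)))"
    unfolding assms(2) N[symmetric] delannoy_Suc a b using odd_pred_pow2[OF N assms(1)]
    by (simp add: algebra_simps power2_eq_square power3_eq_cube)
  finally have "alt_delannoy_sum n
      = 2 * int n ^ 2 + int n ^ 3 * (int n * (2 * a + 4 * b) - (4 * int n ^ 2 - 1) * (a + b))"
    by simp
  moreover have "(\<Sum>k=0..n-1. (-1) ^ k * (2 * int k + 1) ^ 3 * delannoy k) = alt_delannoy_sum n"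
    unfolding alt_delannoy_sum_def assms(2) N[symmetric] by (simp add: atLeast0AtMost lessThan_Suc_atMost)
  ultimately show ?thesis
    by (simp add: cong_iff_dvd_diff)
qed

end
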